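(* For any $n\ge 1$, the Hochschild lattice $(\mathsf{Tr}(n),\preccurlyeq)$ is extremal.
   Context: A triword of size $n$ is a word $u=u_1\cdots u_n$ with $u_i\in\{0,1,2\}$, $u_1\ne 2$, and such that $u_i=0$ implies $u_j\neq 1$ for all $j>i$; $\mathsf{Tr}(n)$ is their set, ordered componentwise ($u\preccurlyeq v$ iff $u_i\le v_i$ for all $i$); it is a lattice. An element of a finite lattice is join-irreducible (resp. meet-irreducible) if it covers (resp. is covered by) exactly one element. A finite lattice is extremal if the length $k$ of a longest saturated chain from its minimum to its maximum equals both the number of join-irreducible elements and the number of meet-irreducible elements. *)

theory Defs
  imports Main
begin

definition triword :: "nat \<Rightarrow> nat list \<Rightarrow> bool" where
  "triword n u \<longleftrightarrow> length u = n \<and> (\<forall>i<n. u ! i \<in> {0,1,2}) \<and>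
     (n \<ge> 1 \<longrightarrow> u ! 0 \<noteq> 2) \<and>
     (\<forall>i<n. \<forall>j<n. i < j \<longrightarrow> u ! i = 0 \<longrightarrow> u ! j \<noteq> 1)"

definition Tr :: "nat \<Rightarrow> nat list set" where
  "Tr n = {u. triword n u}"

definition tr_le :: "nat list \<Rightarrow> nat list \<Rightarrow> bool" where
  "tr_le u v \<longleftrightarrow> length u = length v \<and> (\<forall>i<length u. u ! i \<le> v ! i)"

definition covers :: "'a set \<Rightarrow> ('a \<Rightarrow> 'a \<Rightarrow> bool) \<Rightarrow> 'a \<Rightarrow> 'a \<Rightarrow> bool" where
  "covers L le y x \<longleftrightarrow> x \<in> L \<and> y \<in> L \<and> le x y \<and> x \<noteq> y \<and>
     \<not> (\<exists>z\<in>L. le x z \<and> le z y \<and> z \<noteq> x \<and> z \<noteq> y)"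

definition join_irreducible :: "'a set \<Rightarrow> ('a \<Rightarrow> 'a \<Rightarrow> bool) \<Rightarrow> 'a \<Rightarrow> bool" where
  "join_irreducible L le x \<longleftrightarrow> x \<in> L \<and> card {y\<in>L. covers L le x y} = 1"

definition meet_irreducible :: "'a set \<Rightarrow> ('a \<Rightarrow> 'a \<Rightarrow> bool) \<Rightarrow> 'a \<Rightarrow> bool" where
  "meet_irreducible L le x \<longleftrightarrow> x \<in> L \<and> card {y\<in>L. covers L le y x} = 1"

text \<open>A saturated chain from the minimum to the maximum of L, as the list of its
  elements x_0 < x_1 < ... < x_k (its length is k = length xs - 1).\<close>
definition max_sat_chain :: "'a set \<Rightarrow> ('a \<Rightarrow> 'a \<Rightarrow> bool) \<Rightarrow> 'a list \<Rightarrow> bool" where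
  "max_sat_chain L le xs \<longleftrightarrow> xs \<noteq> [] \<and> set xs \<subseteq> L \<and>
     (\<forall>y\<in>L. le (hd xs) y) \<and> (\<forall>y\<in>L. le y (last xs)) \<and>
     (\<forall>i. Suc i < length xs \<longrightarrow> covers L le (xs ! Suc i) (xs ! i))"

definition extremal :: "'a set \<Rightarrow> ('a \<Rightarrow> 'a \<Rightarrow> bool) \<Rightarrow> bool" where
  "extremal L le \<longleftrightarrow> (\<exists>k.
     (\<exists>xs. max_sat_chain L le xs \<and> length xs = Suc k) \<and>
     (\<forall>xs. max_sat_chain L le xs \<longrightarrow> length xs \<le> Suc k) \<and>
     card {x\<in>L. join_irreducible L le x} = k \<and>
     card {x\<in>L. meet_irreducible L le x} = k)"

end

(*
  A cover u < v in Tr(n) changes a single letter, and at each position a triword has at most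
  one lower and at most one upper cover. So the lower covers of x correspond to its letters 2
  together with its last letter 1 (the only 1 that may drop to 0), and the upper covers to its
  letters 0 together with its letters 1 outside the first position. Exactly one lower cover
  forces x = 1^k 0^(n-k) (1 <= k <= n) or x = 0..020..0 (the 2 not in front); exactly one upper
  cover forces x to be the top word 1 2^(n-1) with one letter lowered. Both families have
  2n - 1 members. The letter sum strictly increases along covers and is at most 2n - 1, the sum
  of the top word, and the chain 0^n < 10^(n-1) < ... < 1^n < 1^(n-1)2 < ... < 12^(n-1) has
  exactly 2n - 1 cover steps.
*)
theory Submission
  imports Defs
begin

lemma nth_eq_imp_list_update_eq:
  assumes "length u = length v" and "\<forall>j<length v. j \<noteq> i \<longrightarrow> u ! j = v ! j"
  shows "u = v[i := u ! i]"
  using assms by (intro nth_equalityI) (simp_all, metis nth_list_update_eq nth_list_update_neq)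

lemma list_update_eq_list_update_iff:
  assumes "i < length xs" "a \<noteq> xs ! i" "j < length xs" "b \<noteq> xs ! j"
  shows "xs[i := a] = xs[j := b] \<longleftrightarrow> i = j \<and> a = b"
  using assms by (metis nth_list_update_eq nth_list_update_neq)

lemma inj_on_list_update: "inj_on (\<lambda>i. xs[i := f i]) {i. i < length xs \<and> f i \<noteq> xs ! i}"
  by (rule inj_onI) (simp add: list_update_eq_list_update_iff)

lemma obtain_last_index:
  fixes n :: nat
  assumes "j < n" "P j"
  obtains i where "i < n" "P i" "\<forall>k<n. i < k \<longrightarrow> \<not> P k"
proof -
  obtain i where "i < n \<and> P i" and greatest: "\<forall>k. k < n \<and> P k \<longrightarrow> k \<le> i"
    using ex_has_greatest_nat[of "\<lambda>k. k < n \<and> P k" j "\<lambda>k. k" n] assms by auto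
  then show ?thesis
    using that by (meson leD)
qed

lemma card_Sigma_lessThan_nth: "card (SIGMA i:{..<length xs}. {..<xs ! i}) = sum_list xs"
  by (simp add: sum_list_sum_nth atLeast0LessThan)

lemma max_sat_chain_length_le:
  fixes f :: "'a \<Rightarrow> nat"
  assumes chain: "max_sat_chain L le xs"
    and mono: "\<And>x y. covers L le y x \<Longrightarrow> f x < f y"
    and bound: "\<And>x. x \<in> L \<Longrightarrow> f x \<le> m"
  shows "length xs \<le> Suc m"
proof -
  have "i \<le> f (xs ! i)" if "i < length xs" for i
    using that
  proof (induction i)
    case (Suc i)
    then have "covers L le (xs ! Suc i) (xs ! i)"
      using chain by (simp add: max_sat_chain_def)
    with Suc show ?case
      using mono by fastforce
  qed simp
  moreover have "length xs - 1 < length xs" "xs ! (length xs - 1) \<in> L"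
    using chain nth_mem[of "length xs - 1" xs] by (auto simp: max_sat_chain_def)
  ultimately have "length xs - 1 \<le> m"
    using bound order_trans by blast
  then show ?thesis
    by simp
qed

lemma sum_list_less_if_tr_le:
  assumes "tr_le u v" and "u \<noteq> v"
  shows "sum_list u < sum_list v"
proof -
  have len: "length u = length v" and le: "\<forall>i<length u. u ! i \<le> v ! i"
    using assms(1) by (auto simp: tr_le_def)
  obtain i where "i < length u" "u ! i \<noteq> v ! i"
    using len assms(2) nth_equalityI by blast
  with le have "\<exists>i\<in>{..<length u}. u ! i < v ! i"
    by (auto intro: le_neq_implies_less)
  with le have "(\<Sum>i<length u. u ! i) < (\<Sum>i<length u. v ! i)"
    by (intro sum_strict_mono_ex1) auto
  with len show ?thesis
    by (simp add: sum_list_sum_nth atLeast0LessThan)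
qed

lemma tr_le_list_update:
  assumes "length u = length v" "\<forall>j<length v. u ! j \<le> v ! j" "i < length v" "a \<le> v ! i" "u ! i \<le> a"
  shows "tr_le u (v[i := a])" "tr_le (v[i := a]) v"
  using assms by (auto simp: tr_le_def nth_list_update)

lemma Tr_length: "x \<in> Tr n \<Longrightarrow> length x = n"
  by (simp add: Tr_def triword_def)

lemma Tr_letter_le: "x \<in> Tr n \<Longrightarrow> i < n \<Longrightarrow> x ! i \<le> 2"
  by (auto simp: Tr_def triword_def)

lemma Tr_first_letter: "x \<in> Tr n \<Longrightarrow> 0 < n \<Longrightarrow> x ! 0 \<noteq> 2"
  by (simp add: Tr_def triword_def)

lemma Tr_no_one_after_zero: "x \<in> Tr n \<Longrightarrow> j < k \<Longrightarrow> k < n \<Longrightarrow> x ! j = 0 \<Longrightarrow> x ! k \<noteq> 1"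
  by (simp add: Tr_def triword_def) (meson order.strict_trans)

lemma Tr_update_iff:
  assumes "x \<in> Tr n" and "i < n"
  shows "x[i := a] \<in> Tr n \<longleftrightarrow> a \<le> 2 \<and> (i = 0 \<longrightarrow> a \<noteq> 2) \<and>
     (a = 0 \<longrightarrow> (\<forall>k<n. i < k \<longrightarrow> x ! k \<noteq> 1)) \<and> (a = 1 \<longrightarrow> (\<forall>j<i. x ! j \<noteq> 0))"
  using assms unfolding Tr_def triword_def
  by (auto simp: nth_list_update)

section \<open>Covers in the Hochschild lattice\<close>

lemma covers_TrI:
  assumes u: "u \<in> Tr n" and v: "v \<in> Tr n" and "i < n"
    and agree: "\<forall>j<n. j \<noteq> i \<longrightarrow> u ! j = v ! j" and less: "u ! i < v ! i"
    and gap: "u ! i = 0 \<and> v ! i = 2 \<longrightarrow> v[i := 1] \<notin> Tr n"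
  shows "covers (Tr n) tr_le v u"
proof -
  have len: "length u = n" "length v = n"
    using u v by (simp_all add: Tr_length)
  have u_eq: "u = v[i := u ! i]"
    using len agree by (intro nth_eq_imp_list_update_eq) simp_all
  have "tr_le u v"
    using len agree less by (auto simp: tr_le_def nat_less_le)
  moreover have "u \<noteq> v"
    using less by auto
  moreover have False if z: "z \<in> Tr n" "tr_le u z" "tr_le z v" "z \<noteq> u" "z \<noteq> v" for z
  proof -
    have "z ! j = v ! j" if "j < n" "j \<noteq> i" for j
      using z(2,3) that agree len by (auto simp: tr_le_def) (metis le_antisym)
    then have z_eq: "z = v[i := z ! i]"
      using z(1) len by (intro nth_eq_imp_list_update_eq) (simp_all add: Tr_length)
    have "u ! i \<le> z ! i" "z ! i \<le> v ! i"
      using z(2,3) len \<open>i < n\<close> by (auto simp: tr_le_def)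
    moreover have "z ! i \<noteq> v ! i"
      using z_eq z(5) by (metis list_update_id)
    moreover have "z ! i \<noteq> u ! i"
      using z_eq u_eq z(4) by metis
    ultimately have "u ! i = 0" "z ! i = 1" "v ! i = 2"
      using Tr_letter_le[OF v \<open>i < n\<close>] by linarith+
    then show False
      using gap z(1) z_eq by simp
  qed
  ultimately show ?thesis
    using u v unfolding covers_def by blast
qed

lemma Tr_update_last_difference:
  assumes u: "u \<in> Tr n" and v: "v \<in> Tr n" and le: "\<forall>j<n. u ! j \<le> v ! j"
    and "i < n" and after: "\<forall>k<n. i < k \<longrightarrow> u ! k = v ! k"
  shows "v[i := u ! i] \<in> Tr n"
  unfolding Tr_update_iff[OF v \<open>i < n\<close>]
proof (intro conjI impI allI)
  show "u ! i \<le> 2" "i = 0 \<Longrightarrow> u ! i \<noteq> 2"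
    using Tr_letter_le[OF u \<open>i < n\<close>] Tr_first_letter[OF u] \<open>i < n\<close> by auto
  show "v ! k \<noteq> 1" if "u ! i = 0" "k < n" "i < k" for k
    using that Tr_no_one_after_zero[OF u, of i k] after by simp
  show "v ! j \<noteq> 0" if "u ! i = 1" "j < i" for j
    using that Tr_no_one_after_zero[OF u, of j i] le \<open>i < n\<close> by (metis le_zero_eq order.strict_trans)
qed

lemma covers_TrD:
  assumes cov: "covers (Tr n) tr_le v u"
  obtains i where "i < n" "u = v[i := u ! i]" "u ! i < v ! i"
    "u ! i = 0 \<and> v ! i = 2 \<longrightarrow> v[i := 1] \<notin> Tr n"
proof -
  have u: "u \<in> Tr n" and v: "v \<in> Tr n" and "tr_le u v" "u \<noteq> v"
    using cov by (simp_all add: covers_def)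
  have between: "z = u \<or> z = v" if "z \<in> Tr n" "tr_le u z" "tr_le z v" for z
    using cov that unfolding covers_def by blast
  have len: "length u = n" "length v = n"
    using u v by (simp_all add: Tr_length)
  have le: "\<forall>j<n. u ! j \<le> v ! j"
    using \<open>tr_le u v\<close> len by (simp add: tr_le_def)
  obtain j where "j < n" "u ! j \<noteq> v ! j"
    using \<open>u \<noteq> v\<close> len by (metis nth_equalityI)
  then obtain i where "i < n" "u ! i \<noteq> v ! i" and after: "\<forall>k<n. i < k \<longrightarrow> u ! k = v ! k"
    by (rule obtain_last_index) blast
  with le have i: "i < n" "u ! i < v ! i"
    by (simp_all add: order.strict_iff_order)
  have "v[i := u ! i] \<in> Tr n"
    using u v le i(1) after by (rule Tr_update_last_difference)
  moreover have "v[i := u ! i] \<noteq> v"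
    using i len by (metis less_irrefl nth_list_update_eq)
  moreover have "tr_le u (v[i := u ! i])" "tr_le (v[i := u ! i]) v"
    using tr_le_list_update[of u v i "u ! i"] len le i by simp_all
  ultimately have u_eq: "u = v[i := u ! i]"
    using between[of "v[i := u ! i]"] by auto
  have gap: "u ! i = 0 \<and> v ! i = 2 \<longrightarrow> v[i := 1] \<notin> Tr n"
  proof (intro impI notI)
    assume letters: "u ! i = 0 \<and> v ! i = 2" and "v[i := 1] \<in> Tr n"
    moreover have "tr_le u (v[i := 1])" "tr_le (v[i := 1]) v"
      using tr_le_list_update[of u v i 1] len le i letters by simp_all
    moreover have "v[i := 1] ! i = 1"
      using i len by simp
    ultimately show False
      using between[of "v[i := 1]"] by fastforce
  qed
  from i(1) u_eq i(2) gap show ?thesis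
    by (rule that)
qed

(* A letter 2 drops to 1 unless a 0 precedes it (a 1 after a 0 is forbidden); otherwise the
   letter drops to 0. *)
definition lower_cover_at :: "nat list \<Rightarrow> nat \<Rightarrow> nat list" where
  "lower_cover_at x i = x[i := (if x ! i = 2 \<and> (\<forall>j<i. x ! j \<noteq> 0) then 1 else 0)]"

definition down_positions :: "nat \<Rightarrow> nat list \<Rightarrow> nat set" where
  "down_positions n x = {i. i < n \<and> (x ! i = 2 \<or> x ! i = 1 \<and> (\<forall>k<n. i < k \<longrightarrow> x ! k \<noteq> 1))}"

lemma lower_cover_at_covers:
  assumes x: "x \<in> Tr n" and "i \<in> down_positions n x"
  shows "covers (Tr n) tr_le x (lower_cover_at x i)"
proof -
  from assms(2) have i: "i < n" and pos: "x ! i = 2 \<or> x ! i = 1 \<and> (\<forall>k<n. i < k \<longrightarrow> x ! k \<noteq> 1)"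
    by (simp_all add: down_positions_def)
  have "lower_cover_at x i \<in> Tr n"
    unfolding lower_cover_at_def Tr_update_iff[OF x i]
    using pos Tr_no_one_after_zero[OF x] by (auto dest: less_trans)
  then show ?thesis
    using x i pos Tr_length[OF x] Tr_update_iff[OF x i, of 1]
    by (intro covers_TrI[where i = i]) (auto simp: lower_cover_at_def)
qed

lemma lower_cover_TrE:
  assumes x: "x \<in> Tr n" and cov: "covers (Tr n) tr_le x y"
  obtains i where "i \<in> down_positions n x" "y = lower_cover_at x i"
proof -
  from cov obtain i where i: "i < n" "y = x[i := y ! i]" "y ! i < x ! i"
    and gap: "y ! i = 0 \<and> x ! i = 2 \<longrightarrow> x[i := 1] \<notin> Tr n"
    by (rule covers_TrD)
  have y_Tr: "x[i := y ! i] \<in> Tr n"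
    using cov i(2) by (simp add: covers_def)
  show ?thesis
  proof (cases "x ! i = 1")
    case True
    then have "i \<in> down_positions n x"
      using i y_Tr Tr_update_iff[OF x \<open>i < n\<close>] by (simp add: down_positions_def)
    moreover have "y = lower_cover_at x i"
      using True i by (simp add: lower_cover_at_def)
    ultimately show ?thesis
      by (rule that)
  next
    case False
    then have "x ! i = 2"
      using i(3) Tr_letter_le[OF x \<open>i < n\<close>] by linarith
    then have "i \<in> down_positions n x"
      using i by (simp add: down_positions_def)
    moreover have "y ! i = (if \<forall>j<i. x ! j \<noteq> 0 then 1 else 0)"
      using \<open>x ! i = 2\<close> i y_Tr gap Tr_update_iff[OF x \<open>i < n\<close>, of 1]
        Tr_update_iff[OF x \<open>i < n\<close>, of "y ! i"]
      by auto
    then have "y = lower_cover_at x i"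
      unfolding lower_cover_at_def using \<open>x ! i = 2\<close> by (subst i(2)) simp
    ultimately show ?thesis
      by (rule that)
  qed
qed

lemma lower_covers_Tr:
  assumes "x \<in> Tr n"
  shows "{y \<in> Tr n. covers (Tr n) tr_le x y} = lower_cover_at x ` down_positions n x"
  (is "?L = ?R")
proof
  show "?L \<subseteq> ?R"
  proof
    fix y
    assume "y \<in> ?L"
    then have "covers (Tr n) tr_le x y"
      by simp
    then obtain i where "i \<in> down_positions n x" "y = lower_cover_at x i"
      by (rule lower_cover_TrE[OF assms])
    then show "y \<in> ?R"
      by blast
  qed
  show "?R \<subseteq> ?L"
    using lower_cover_at_covers[OF assms] by (auto simp: covers_def)
qed

lemma card_lower_covers_Tr:
  assumes "x \<in> Tr n"
  shows "card {y \<in> Tr n. covers (Tr n) tr_le x y} = card (down_positions n x)"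
proof -
  have "inj_on (lower_cover_at x) (down_positions n x)"
    unfolding lower_cover_at_def
    by (rule inj_on_subset[OF inj_on_list_update]) (auto simp: down_positions_def Tr_length[OF assms])
  then show ?thesis
    using lower_covers_Tr[OF assms] by (simp add: card_image)
qed

lemma join_irreducible_Tr_iff:
  "join_irreducible (Tr n) tr_le x \<longleftrightarrow> x \<in> Tr n \<and> card (down_positions n x) = 1"
  using card_lower_covers_Tr by (auto simp: join_irreducible_def)

(* A letter 0 rises to 1 unless a 0 precedes it (a 1 after a 0 is forbidden); otherwise the
   letter rises to 2. *)
definition upper_cover_at :: "nat list \<Rightarrow> nat \<Rightarrow> nat list" where
  "upper_cover_at x i = x[i := (if x ! i = 0 \<and> (\<forall>j<i. x ! j \<noteq> 0) then 1 else 2)]"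

definition up_positions :: "nat \<Rightarrow> nat list \<Rightarrow> nat set" where
  "up_positions n x = {i. i < n \<and> (x ! i = 0 \<or> x ! i = 1 \<and> 0 < i)}"

lemma upper_cover_at_covers:
  assumes x: "x \<in> Tr n" and "i \<in> up_positions n x"
  shows "covers (Tr n) tr_le (upper_cover_at x i) x"
proof -
  from assms(2) have i: "i < n" and pos: "x ! i = 0 \<or> x ! i = 1 \<and> 0 < i"
    by (simp_all add: up_positions_def)
  have "upper_cover_at x i \<in> Tr n"
    unfolding upper_cover_at_def Tr_update_iff[OF x i]
    using pos by (auto intro!: gr0I)
  then show ?thesis
    using x i pos Tr_length[OF x] Tr_update_iff[OF x i, of 1]
    by (intro covers_TrI[where i = i]) (auto simp: upper_cover_at_def)
qed

lemma upper_cover_TrE: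
  assumes x: "x \<in> Tr n" and cov: "covers (Tr n) tr_le y x"
  obtains i where "i \<in> up_positions n x" "y = upper_cover_at x i"
proof -
  from cov obtain i where i: "i < n" "x = y[i := x ! i]" "x ! i < y ! i"
    and gap: "x ! i = 0 \<and> y ! i = 2 \<longrightarrow> y[i := 1] \<notin> Tr n"
    by (rule covers_TrD)
  have y_eq: "y = x[i := y ! i]"
    using i(2) by (metis list_update_id list_update_overwrite)
  have y: "y \<in> Tr n"
    using cov by (simp add: covers_def)
  then have y_Tr: "x[i := y ! i] \<in> Tr n" and "y ! i \<le> 2"
    using y_eq Tr_letter_le[OF y \<open>i < n\<close>] by simp_all
  show ?thesis
  proof (cases "x ! i = 0")
    case True
    then have "i \<in> up_positions n x"
      using i by (simp add: up_positions_def)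
    moreover have "y ! i = (if \<forall>j<i. x ! j \<noteq> 0 then 1 else 2)"
    proof (cases "\<forall>j<i. x ! j \<noteq> 0")
      case no_zero_before: True
      have "y[i := 1] = x[i := 1]"
        by (subst y_eq) simp
      moreover have "x[i := 1] \<in> Tr n"
        using no_zero_before Tr_update_iff[OF x \<open>i < n\<close>] by simp
      ultimately show ?thesis
        using no_zero_before gap True i(3) \<open>y ! i \<le> 2\<close> by auto
    next
      case False
      then have "x[i := 1] \<notin> Tr n"
        using Tr_update_iff[OF x \<open>i < n\<close>] by simp
      then show ?thesis
        using False y_Tr True i(3) \<open>y ! i \<le> 2\<close> by (cases "y ! i = 1") auto
    qed
    then have "y = upper_cover_at x i"
      unfolding upper_cover_at_def using True by (subst y_eq) simp
    ultimately show ?thesis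
      by (rule that)
  next
    case False
    then have "x ! i = 1" "y ! i = 2"
      using i(3) \<open>y ! i \<le> 2\<close> by linarith+
    then have "i \<in> up_positions n x"
      using i y_Tr Tr_update_iff[OF x \<open>i < n\<close>] by (simp add: up_positions_def)
    moreover have "y = upper_cover_at x i"
      unfolding upper_cover_at_def using \<open>x ! i = 1\<close> \<open>y ! i = 2\<close> by (subst y_eq) simp
    ultimately show ?thesis
      by (rule that)
  qed
qed

lemma upper_covers_Tr:
  assumes "x \<in> Tr n"
  shows "{y \<in> Tr n. covers (Tr n) tr_le y x} = upper_cover_at x ` up_positions n x"
  (is "?L = ?R")
proof
  show "?L \<subseteq> ?R"
  proof
    fix y
    assume "y \<in> ?L"
    then have "covers (Tr n) tr_le y x"
      by simp
    then obtain i where "i \<in> up_positions n x" "y = upper_cover_at x i"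
      by (rule upper_cover_TrE[OF assms])
    then show "y \<in> ?R"
      by blast
  qed
  show "?R \<subseteq> ?L"
    using upper_cover_at_covers[OF assms] by (auto simp: covers_def)
qed

lemma card_upper_covers_Tr:
  assumes "x \<in> Tr n"
  shows "card {y \<in> Tr n. covers (Tr n) tr_le y x} = card (up_positions n x)"
proof -
  have "inj_on (upper_cover_at x) (up_positions n x)"
    unfolding upper_cover_at_def
    by (rule inj_on_subset[OF inj_on_list_update]) (auto simp: up_positions_def Tr_length[OF assms])
  then show ?thesis
    using upper_covers_Tr[OF assms] by (simp add: card_image)
qed

lemma meet_irreducible_Tr_iff:
  "meet_irreducible (Tr n) tr_le x \<longleftrightarrow> x \<in> Tr n \<and> card (up_positions n x) = 1"
  using card_upper_covers_Tr by (auto simp: meet_irreducible_def)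

section \<open>Join-irreducible elements\<close>

definition ones_then_zeros :: "nat \<Rightarrow> nat \<Rightarrow> nat list" where
  "ones_then_zeros n k = map (\<lambda>j. if j < k then 1 else 0) [0..<n]"

definition zeros_with_two :: "nat \<Rightarrow> nat \<Rightarrow> nat list" where
  "zeros_with_two n i = map (\<lambda>j. if j = i then 2 else 0) [0..<n]"

lemma ones_then_zeros_Tr: "ones_then_zeros n k \<in> Tr n"
  by (auto simp: ones_then_zeros_def Tr_def triword_def)

lemma zeros_with_two_Tr: "0 < i \<Longrightarrow> zeros_with_two n i \<in> Tr n"
  by (auto simp: zeros_with_two_def Tr_def triword_def)

lemma down_positions_ones_then_zeros:
  assumes "1 \<le> k" "k \<le> n"
  shows "down_positions n (ones_then_zeros n k) = {k - 1}"
proof (intro set_eqI iffI)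
  have letter: "ones_then_zeros n k ! j = (if j < k then 1 else 0)" if "j < n" for j
    using that by (simp add: ones_then_zeros_def)
  fix i
  assume "i \<in> down_positions n (ones_then_zeros n k)"
  then have "i < n" "i < k" and last: "\<forall>m<n. i < m \<longrightarrow> \<not> m < k"
    unfolding down_positions_def using letter by (auto split: if_split_asm)
  moreover have "\<not> Suc i < k"
    using last[rule_format, of "Suc i"] assms by linarith
  ultimately show "i \<in> {k - 1}"
    by simp
next
  fix i
  assume "i \<in> {k - 1}"
  then show "i \<in> down_positions n (ones_then_zeros n k)"
    using assms by (auto simp: down_positions_def ones_then_zeros_def)
qed

lemma down_positions_zeros_with_two:
  assumes "i < n"
  shows "down_positions n (zeros_with_two n i) = {i}"
  using assms unfolding down_positions_def zeros_with_two_def by (auto split: if_split_asm)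

lemma last_one_in_down_positions:
  assumes "j < n" "x ! j = 1"
  obtains m where "m \<in> down_positions n x" "x ! m = 1"
proof -
  from assms obtain m where "m < n" "x ! m = 1" "\<forall>k<n. m < k \<longrightarrow> x ! k \<noteq> 1"
    by (rule obtain_last_index)
  then show ?thesis
    using that by (simp add: down_positions_def)
qed

lemma down_positions_singleton_two:
  assumes x: "x \<in> Tr n" and D: "down_positions n x = {i}" and two: "x ! i = 2"
  shows "0 < i" "x = zeros_with_two n i"
proof -
  have "i \<in> down_positions n x"
    using D by simp
  then have "i < n"
    by (simp add: down_positions_def)
  then show "0 < i"
    using two Tr_first_letter[OF x] by (cases i) auto
  have no_one: "x ! j \<noteq> 1" if "j < n" for j
  proof
    assume "x ! j = 1"
    with \<open>j < n\<close> obtain m where "m \<in> down_positions n x" "x ! m = 1"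
      by (rule last_one_in_down_positions)
    then show False
      using D two by simp
  qed
  have no_two: "x ! j \<noteq> 2" if "j < n" "j \<noteq> i" for j
    using D that by (auto simp: down_positions_def)
  have "x ! j = (if j = i then 2 else 0)" if "j < n" for j
    using no_one[OF that] no_two[OF that] Tr_letter_le[OF x that] two by auto
  then show "x = zeros_with_two n i"
    by (intro nth_equalityI) (simp_all add: Tr_length[OF x] zeros_with_two_def)
qed

lemma down_positions_singleton_one:
  assumes x: "x \<in> Tr n" and D: "down_positions n x = {i}" and one: "x ! i = 1"
  shows "x = ones_then_zeros n (Suc i)"
proof -
  have "i \<in> down_positions n x"
    using D by simp
  then have i: "i < n" and last: "\<forall>k<n. i < k \<longrightarrow> x ! k \<noteq> 1"
    using one by (simp_all add: down_positions_def)
  have no_two: "x ! j \<noteq> 2" if "j < n" "j \<noteq> i" for j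
    using D that by (auto simp: down_positions_def)
  have "x ! j = (if j < Suc i then 1 else 0)" if "j < n" for j
  proof (cases "j < i")
    case True
    then have "x ! j \<noteq> 0" "x ! j \<noteq> 2"
      using Tr_no_one_after_zero[OF x True i] one no_two[OF that] by auto
    with True Tr_letter_le[OF x that] show ?thesis
      by simp
  next
    case False
    show ?thesis
    proof (cases "j = i")
      case False
      with \<open>\<not> j < i\<close> have "x ! j \<noteq> 1" "x ! j \<noteq> 2"
        using last no_two[OF that] that by auto
      with False \<open>\<not> j < i\<close> Tr_letter_le[OF x that] show ?thesis
        by simp
    qed (simp add: one)
  qed
  then show ?thesis
    by (intro nth_equalityI) (simp_all add: Tr_length[OF x] ones_then_zeros_def)
qed

lemma card_down_positions_eq_1_iff:
  assumes x: "x \<in> Tr n"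
  shows "card (down_positions n x) = 1 \<longleftrightarrow>
    (\<exists>k\<in>{1..n}. x = ones_then_zeros n k) \<or> (\<exists>i\<in>{1..<n}. x = zeros_with_two n i)"
proof
  assume "card (down_positions n x) = 1"
  then obtain i where D: "down_positions n x = {i}"
    by (rule card_1_singletonE)
  then have "i \<in> down_positions n x"
    by simp
  then have "i < n" and letter: "x ! i = 2 \<or> x ! i = 1"
    by (auto simp: down_positions_def)
  show "(\<exists>k\<in>{1..n}. x = ones_then_zeros n k) \<or> (\<exists>i\<in>{1..<n}. x = zeros_with_two n i)"
  proof (cases "x ! i = 2")
    case True
    with down_positions_singleton_two[OF x D] \<open>i < n\<close> show ?thesis
      by auto
  next
    case False
    with letter have "x = ones_then_zeros n (Suc i)"
      by (intro down_positions_singleton_one[OF x D]) simp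
    with \<open>i < n\<close> show ?thesis
      by auto
  qed
next
  assume "(\<exists>k\<in>{1..n}. x = ones_then_zeros n k) \<or> (\<exists>i\<in>{1..<n}. x = zeros_with_two n i)"
  then have "\<exists>i. down_positions n x = {i}"
  proof (elim disjE bexE)
    fix k
    assume "k \<in> {1..n}" "x = ones_then_zeros n k"
    then show ?thesis
      by (simp add: down_positions_ones_then_zeros)
  next
    fix i
    assume "i \<in> {1..<n}" "x = zeros_with_two n i"
    then show ?thesis
      by (simp add: down_positions_zeros_with_two)
  qed
  then show "card (down_positions n x) = 1"
    by (elim exE) simp
qed

lemma join_irreducibles_Tr:
  "{x \<in> Tr n. join_irreducible (Tr n) tr_le x} =
    ones_then_zeros n ` {1..n} \<union> zeros_with_two n ` {1..<n}"
proof -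
  have "ones_then_zeros n ` {1..n} \<union> zeros_with_two n ` {1..<n} \<subseteq> Tr n"
    using ones_then_zeros_Tr zeros_with_two_Tr by auto
  moreover have "join_irreducible (Tr n) tr_le x \<longleftrightarrow>
      x \<in> ones_then_zeros n ` {1..n} \<union> zeros_with_two n ` {1..<n}" if "x \<in> Tr n" for x
    using card_down_positions_eq_1_iff[OF that] that by (simp add: join_irreducible_Tr_iff image_iff)
  ultimately show ?thesis
    by (intro set_eqI) (metis (no_types, lifting) mem_Collect_eq subsetD)
qed

lemma card_join_irreducibles_Tr:
  assumes "1 \<le> n"
  shows "card {x \<in> Tr n. join_irreducible (Tr n) tr_le x} = 2 * n - 1"
proof -
  have "inj_on (ones_then_zeros n) {1..n}"
  proof (rule inj_onI)
    fix k k'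
    assume k: "k \<in> {1..n}" and k': "k' \<in> {1..n}"
      and "ones_then_zeros n k = ones_then_zeros n k'"
    then have same: "\<forall>j<n. (j < k) = (j < k')"
      by (auto simp: ones_then_zeros_def map_eq_conv split: if_split_asm)
    have "k - 1 < k'" "k' - 1 < k"
      using same[rule_format, of "k - 1"] same[rule_format, of "k' - 1"] k k' by auto
    with k k' show "k = k'"
      by simp
  qed
  moreover have "inj_on (zeros_with_two n) {1..<n}"
  proof (rule inj_onI)
    fix i i'
    assume "i \<in> {1..<n}" "i' \<in> {1..<n}" "zeros_with_two n i = zeros_with_two n i'"
    then have "zeros_with_two n i ! i = zeros_with_two n i' ! i"
      by simp
    with \<open>i \<in> {1..<n}\<close> show "i = i'"
      by (simp add: zeros_with_two_def split: if_split_asm)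
  qed
  moreover have "ones_then_zeros n k \<noteq> zeros_with_two n i" if "1 \<le> k" "1 \<le> i" for k i
  proof
    assume "ones_then_zeros n k = zeros_with_two n i"
    then have "ones_then_zeros n k ! 0 = zeros_with_two n i ! 0"
      by simp
    with that assms show False
      by (simp add: ones_then_zeros_def zeros_with_two_def)
  qed
  ultimately have "card (ones_then_zeros n ` {1..n} \<union> zeros_with_two n ` {1..<n}) = n + (n - 1)"
    by (subst card_Un_disjoint) (auto simp: card_image)
  with assms show ?thesis
    by (simp add: join_irreducibles_Tr)
qed

section \<open>Meet-irreducible elements\<close>

definition top_triword :: "nat \<Rightarrow> nat list" where
  "top_triword n = map (\<lambda>j. if j = 0 then 1 else 2) [0..<n]"

lemma length_top_triword [simp]: "length (top_triword n) = n"
  by (simp add: top_triword_def)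

lemma top_triword_Tr: "top_triword n \<in> Tr n"
  by (auto simp: top_triword_def Tr_def triword_def)

lemma top_triword_update_Tr:
  assumes "i < n" "a < top_triword n ! i"
  shows "(top_triword n)[i := a] \<in> Tr n"
  using assms unfolding Tr_update_iff[OF top_triword_Tr \<open>i < n\<close>]
  by (auto simp: top_triword_def split: if_split_asm)

lemma up_positions_top_triword_update:
  assumes "i < n" "a < top_triword n ! i"
  shows "up_positions n ((top_triword n)[i := a]) = {i}"
proof (intro set_eqI iffI)
  fix j
  assume "j \<in> up_positions n ((top_triword n)[i := a])"
  then have "j < n" "(top_triword n)[i := a] ! j = 0 \<or> (top_triword n)[i := a] ! j = 1 \<and> 0 < j"
    by (simp_all add: up_positions_def)
  then show "j \<in> {i}"
    using assms by (cases "j = i") (auto simp: top_triword_def split: if_split_asm)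
next
  fix j
  assume "j \<in> {i}"
  with assms show "j \<in> up_positions n ((top_triword n)[i := a])"
    by (auto simp: up_positions_def top_triword_def split: if_split_asm)
qed

lemma card_up_positions_eq_1_iff:
  assumes x: "x \<in> Tr n"
  shows "card (up_positions n x) = 1 \<longleftrightarrow>
    (\<exists>i<n. \<exists>a<top_triword n ! i. x = (top_triword n)[i := a])"
proof
  assume "card (up_positions n x) = 1"
  then obtain i where U: "up_positions n x = {i}"
    by (rule card_1_singletonE)
  then have "i \<in> up_positions n x"
    by simp
  then have i: "i < n" "x ! i = 0 \<or> x ! i = 1 \<and> 0 < i"
    by (simp_all add: up_positions_def)
  have "x ! j = top_triword n ! j" if "j < n" "j \<noteq> i" for j
  proof -
    have "j \<notin> up_positions n x"
      using U that by simp
    then have "x ! j \<noteq> 0" "0 < j \<Longrightarrow> x ! j \<noteq> 1"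
      using that by (simp_all add: up_positions_def)
    moreover have "x ! j \<le> 2" "j = 0 \<Longrightarrow> x ! j \<noteq> 2"
      using Tr_letter_le[OF x \<open>j < n\<close>] Tr_first_letter[OF x] that by auto
    ultimately show ?thesis
      using that by (auto simp: top_triword_def)
  qed
  then have "x = (top_triword n)[i := x ! i]"
    by (intro nth_eq_imp_list_update_eq) (simp_all add: Tr_length[OF x] top_triword_def)
  moreover have "x ! i < top_triword n ! i"
    using i by (auto simp: top_triword_def)
  ultimately show "\<exists>i<n. \<exists>a<top_triword n ! i. x = (top_triword n)[i := a]"
    using i(1) by blast
next
  assume "\<exists>i<n. \<exists>a<top_triword n ! i. x = (top_triword n)[i := a]"
  then obtain i a where "i < n" "a < top_triword n ! i" "x = (top_triword n)[i := a]"
    by blast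
  then show "card (up_positions n x) = 1"
    by (simp add: up_positions_top_triword_update)
qed

lemma meet_irreducibles_Tr:
  "{x \<in> Tr n. meet_irreducible (Tr n) tr_le x} =
    (\<lambda>(i, a). (top_triword n)[i := a]) ` (SIGMA i:{..<n}. {..<top_triword n ! i})"
proof -
  have "(\<lambda>(i, a). (top_triword n)[i := a]) ` (SIGMA i:{..<n}. {..<top_triword n ! i}) \<subseteq> Tr n"
    using top_triword_update_Tr by auto
  moreover have "meet_irreducible (Tr n) tr_le x \<longleftrightarrow>
      x \<in> (\<lambda>(i, a). (top_triword n)[i := a]) ` (SIGMA i:{..<n}. {..<top_triword n ! i})"
    if "x \<in> Tr n" for x
    using card_up_positions_eq_1_iff[OF that] that by (auto simp: meet_irreducible_Tr_iff image_iff)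
  ultimately show ?thesis
    by (intro set_eqI) (metis (no_types, lifting) mem_Collect_eq subsetD)
qed

lemma sum_list_top_triword: "1 \<le> n \<Longrightarrow> sum_list (top_triword n) = 2 * n - 1"
  by (induction n rule: dec_induct) (auto simp: top_triword_def)

lemma card_meet_irreducibles_Tr:
  assumes "1 \<le> n"
  shows "card {x \<in> Tr n. meet_irreducible (Tr n) tr_le x} = 2 * n - 1"
proof -
  let ?S = "SIGMA i:{..<n}. {..<top_triword n ! i}"
  have "inj_on (\<lambda>(i, a). (top_triword n)[i := a]) ?S"
    by (rule inj_onI) (auto simp: list_update_eq_list_update_iff)
  then have "card {x \<in> Tr n. meet_irreducible (Tr n) tr_le x} = card ?S"
    by (simp add: meet_irreducibles_Tr card_image)
  also have "\<dots> = sum_list (top_triword n)"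
    using card_Sigma_lessThan_nth[of "top_triword n"] by (simp add: top_triword_def)
  finally show ?thesis
    using sum_list_top_triword[OF assms] by simp
qed

section \<open>Maximal chains\<close>

lemma tr_le_top_triword: "x \<in> Tr n \<Longrightarrow> tr_le x (top_triword n)"
  using Tr_letter_le Tr_first_letter
  by (fastforce simp: tr_le_def Tr_length top_triword_def)

lemma Tr_sum_list_le: "x \<in> Tr n \<Longrightarrow> sum_list x \<le> sum_list (top_triword n)"
  using sum_list_less_if_tr_le[of x "top_triword n"] tr_le_top_triword by fastforce

lemma max_sat_chain_Tr_length_le:
  assumes "max_sat_chain (Tr n) tr_le xs" "1 \<le> n"
  shows "length xs \<le> Suc (2 * n - 1)"
proof (rule max_sat_chain_length_le[OF assms(1), where f = sum_list])
  show "sum_list x < sum_list y" if "covers (Tr n) tr_le y x" for x y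
    using that by (simp add: covers_def sum_list_less_if_tr_le)
  show "sum_list x \<le> 2 * n - 1" if "x \<in> Tr n" for x
    using Tr_sum_list_le[OF that] sum_list_top_triword[OF assms(2)] by simp
qed

definition staircase :: "nat \<Rightarrow> nat \<Rightarrow> nat list" where
  "staircase n j = map (\<lambda>i. if j \<le> n then (if i < j then 1 else 0) else (if i + j < 2 * n then 1 else 2)) [0..<n]"

lemma staircase_Tr: "j < 2 * n \<Longrightarrow> staircase n j \<in> Tr n"
  by (auto simp: staircase_def Tr_def triword_def)

lemma staircase_covers:
  assumes "Suc j < 2 * n"
  shows "covers (Tr n) tr_le (staircase n (Suc j)) (staircase n j)"
proof -
  have words: "staircase n j \<in> Tr n" "staircase n (Suc j) \<in> Tr n"
    using assms by (simp_all add: staircase_Tr)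
  show ?thesis
  proof (cases "j < n")
    case True
    show ?thesis
      by (rule covers_TrI[OF words True]) (use True in \<open>auto simp: staircase_def\<close>)
  next
    case False
    with assms have "2 * n - Suc j < n"
      by linarith
    show ?thesis
      by (rule covers_TrI[OF words \<open>2 * n - Suc j < n\<close>]) (use False assms in \<open>auto simp: staircase_def\<close>)
  qed
qed

lemma staircase_last: "1 \<le> n \<Longrightarrow> staircase n (2 * n - 1) = top_triword n"
  by (cases "n = 1") (auto simp: staircase_def top_triword_def)

lemma max_sat_chain_staircase:
  assumes "1 \<le> n"
  shows "max_sat_chain (Tr n) tr_le (map (staircase n) [0..<2 * n])"
  unfolding max_sat_chain_def
proof (intro conjI ballI allI impI)
  show "map (staircase n) [0..<2 * n] \<noteq> []" "set (map (staircase n) [0..<2 * n]) \<subseteq> Tr n"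
    using assms by (auto intro: staircase_Tr)
  fix y
  assume "y \<in> Tr n"
  moreover have "hd (map (staircase n) [0..<2 * n]) = staircase n 0"
    using assms by (simp add: hd_map upt_conv_Cons)
  ultimately show "tr_le (hd (map (staircase n) [0..<2 * n])) y"
    by (simp add: tr_le_def Tr_length staircase_def)
  have "last (map (staircase n) [0..<2 * n]) = top_triword n"
    using assms staircase_last[OF assms] by (simp add: last_map)
  with \<open>y \<in> Tr n\<close> show "tr_le y (last (map (staircase n) [0..<2 * n]))"
    by (simp add: tr_le_top_triword)
next
  fix i
  assume "Suc i < length (map (staircase n) [0..<2 * n])"
  then show "covers (Tr n) tr_le (map (staircase n) [0..<2 * n] ! Suc i) (map (staircase n) [0..<2 * n] ! i)"
    by (simp add: staircase_covers)
qed

theorem proposition3p2: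
  fixes n :: nat
  assumes "n \<ge> 1"
  shows "extremal (Tr n) tr_le"
  unfolding extremal_def
proof (intro exI[of _ "2 * n - 1"] conjI allI impI)
  show "\<exists>xs. max_sat_chain (Tr n) tr_le xs \<and> length xs = Suc (2 * n - 1)"
    using max_sat_chain_staircase[OF assms] assms by (intro exI) auto
  show "length xs \<le> Suc (2 * n - 1)" if "max_sat_chain (Tr n) tr_le xs" for xs
    using max_sat_chain_Tr_length_le[OF that assms] .
  show "card {x \<in> Tr n. join_irreducible (Tr n) tr_le x} = 2 * n - 1"
    using card_join_irreducibles_Tr[OF assms] .
  show "card {x \<in> Tr n. meet_irreducible (Tr n) tr_le x} = 2 * n - 1"
    using card_meet_irreducibles_Tr[OF assms] .
qed

end
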